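(* Let $x_0 \in \mathbb R^{n_x}$, and let $u_0 \in \mathbb R^{n_u} \times \{0,1\}^{m_u}$ be any input with $(x_0, u_0) \in \mathcal D$. Let $x_1 := A x_0 + B u_0$. Then $\theta(x_1) \ge \theta(x_0) - |Q x_0|^2 - |R u_0|^2$ (with the convention $\infty - c = \infty$ for real $c$).
   Context: Fix integers $n_x, n_u, m_u \ge 0$ and $T \ge 1$. Let $A \in \mathbb R^{n_x \times n_x}$, $B \in \mathbb R^{n_x \times (n_u+m_u)}$, and let $F, G, h$ define the polyhedron $\mathcal D = \{(x,u) \in \mathbb R^{n_x} \times \mathbb R^{n_u+m_u} : F x + G u \le h\}$, assumed to contain the origin. Input vectors $u \in \mathbb R^{n_u+m_u}$ have $n_u$ continuous and $m_u$ binary entries; $V$ is the selection matrix with $V u$ equal to the binary entries. Let $Q$ (with $n_x$ columns) and $R$ (with $n_u+m_u$ columns) be weight matrices, possibly rank deficient. For $\xi \in \mathbb R^{n_x}$, $\theta(\xi) \in \mathbb R_{\ge 0} \cup \{\infty\}$ denotes the optimal value ($\infty$ if infeasible) of the mixed-integer quadratic program: minimize $\sum_{t=0}^T |Q x_t|^2 + \sum_{t=0}^{T-1} |R u_t|^2$ over $x_0, \ldots, x_T \in \mathbb R^{n_x}$, $u_0, \ldots, u_{T-1} \in \mathbb R^{n_u+m_u}$ subject to $x_0 = \xi$, $x_{t+1} = A x_t + B u_t$, $(x_t, u_t) \in \mathcal D$, and $V u_t \in \{0,1\}^{m_u}$ for $t = 0, \ldots, T-1$. $|\cdot|$ is the Euclidean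 norm. *)

theory Defs
  imports "Jordan_Normal_Form.Matrix" "HOL-Library.Extended_Real"
begin

definition sqn :: "real vec \<Rightarrow> real" where
  "sqn v = (\<Sum>i<dim_vec v. (v $ i)^2)"

definition inD :: "real mat \<Rightarrow> real mat \<Rightarrow> real vec \<Rightarrow> real vec \<Rightarrow> real vec \<Rightarrow> bool" where
  "inD F G h x u \<longleftrightarrow> (\<forall>i<dim_vec h. (F *\<^sub>v x + G *\<^sub>v u) $ i \<le> h $ i)"

text \<open>Input vectors in R^(nu+mu): entries nu..nu+mu-1 are the binary ones
  (V is the selection matrix [0 I]).\<close>
definition binary_ok :: "nat \<Rightarrow> nat \<Rightarrow> real vec \<Rightarrow> bool" where
  "binary_ok nu mu u \<longleftrightarrow> (\<forall>i. nu \<le> i \<and> i < nu + mu \<longrightarrow> u $ i \<in> {0, 1})"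

definition feasible ::
  "nat \<Rightarrow> nat \<Rightarrow> nat \<Rightarrow> nat \<Rightarrow> real mat \<Rightarrow> real mat \<Rightarrow> real mat \<Rightarrow> real mat \<Rightarrow> real vec
   \<Rightarrow> real vec \<Rightarrow> (nat \<Rightarrow> real vec) \<Rightarrow> (nat \<Rightarrow> real vec) \<Rightarrow> bool" where
  "feasible nx nu mu T A B F G h \<xi> xs us \<longleftrightarrow>
     xs 0 = \<xi> \<and>
     (\<forall>t\<le>T. xs t \<in> carrier_vec nx) \<and>
     (\<forall>t<T. us t \<in> carrier_vec (nu + mu)) \<and>
     (\<forall>t<T. xs (Suc t) = A *\<^sub>v xs t + B *\<^sub>v us t) \<and>
     (\<forall>t<T. inD F G h (xs t) (us t)) \<and>
     (\<forall>t<T. binary_ok nu mu (us t))"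

definition cost :: "nat \<Rightarrow> real mat \<Rightarrow> real mat \<Rightarrow> (nat \<Rightarrow> real vec) \<Rightarrow> (nat \<Rightarrow> real vec) \<Rightarrow> real" where
  "cost T Q R xs us = (\<Sum>t\<le>T. sqn (Q *\<^sub>v xs t)) + (\<Sum>t<T. sqn (R *\<^sub>v us t))"

text \<open>Optimal value of the MIQP (infimum; \<infinity> if infeasible).\<close>
definition theta ::
  "nat \<Rightarrow> nat \<Rightarrow> nat \<Rightarrow> nat \<Rightarrow> real mat \<Rightarrow> real mat \<Rightarrow> real mat \<Rightarrow> real mat \<Rightarrow> real vec
   \<Rightarrow> real mat \<Rightarrow> real mat \<Rightarrow> real vec \<Rightarrow> ereal" where
  "theta nx nu mu T A B F G h Q R \<xi> =
     Inf {ereal (cost T Q R xs us) | xs us. feasible nx nu mu T A B F G h \<xi> xs us}"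

end

theory Submission
  imports Defs
begin

text \<open>Dynamic programming: prepending the step (x0, u0) to any feasible trajectory from
  x1 = A x0 + B u0 and dropping its last step yields a feasible trajectory from x0 whose cost
  exceeds the original one by at most the stage cost of (x0, u0). Taking infima gives
  theta(x0) \<le> theta(x1) + stage cost.\<close>

lemma sqn_nonneg: "0 \<le> sqn v"
  unfolding sqn_def by (simp add: sum_nonneg)

lemma feasible_case_nat:
  assumes "feasible nx nu mu T A B F G h (A *\<^sub>v x0 + B *\<^sub>v u0) xs us"
    and "x0 \<in> carrier_vec nx" and "u0 \<in> carrier_vec (nu + mu)"
    and "inD F G h x0 u0" and "binary_ok nu mu u0"
  shows "feasible nx nu mu T A B F G h x0 (case_nat x0 xs) (case_nat u0 us)"
  using assms unfolding feasible_def
  by (auto split: nat.split)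

lemma cost_le_cost_Suc: "cost T Q R xs us \<le> cost (Suc T) Q R xs us"
  unfolding cost_def by (simp add: sqn_nonneg add_mono)

lemma cost_Suc_case_nat:
  "cost (Suc T) Q R (case_nat x0 xs) (case_nat u0 us)
     = sqn (Q *\<^sub>v x0) + sqn (R *\<^sub>v u0) + cost T Q R xs us"
  unfolding cost_def sum.atMost_Suc_shift sum.lessThan_Suc_shift by simp

lemma cost_case_nat_le:
  "cost T Q R (case_nat x0 xs) (case_nat u0 us)
     \<le> sqn (Q *\<^sub>v x0) + sqn (R *\<^sub>v u0) + cost T Q R xs us"
  using cost_le_cost_Suc[of T Q R "case_nat x0 xs" "case_nat u0 us"]
  by (simp add: cost_Suc_case_nat)

lemma theta_le_cost:
  "feasible nx nu mu T A B F G h \<xi> xs us \<Longrightarrow> theta nx nu mu T A B F G h Q R \<xi> \<le> ereal (cost T Q R xs us)"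
  unfolding theta_def by (rule Inf_lower) blast

lemma theta_minus_stage_cost_le_theta_step:
  assumes "x0 \<in> carrier_vec nx" and "u0 \<in> carrier_vec (nu + mu)"
    and "inD F G h x0 u0" and "binary_ok nu mu u0"
  shows "theta nx nu mu T A B F G h Q R x0 - ereal (sqn (Q *\<^sub>v x0) + sqn (R *\<^sub>v u0))
           \<le> theta nx nu mu T A B F G h Q R (A *\<^sub>v x0 + B *\<^sub>v u0)"
  unfolding theta_def[of _ _ _ _ _ _ _ _ _ _ _ "A *\<^sub>v x0 + B *\<^sub>v u0"]
proof (rule Inf_greatest)
  let ?c = "sqn (Q *\<^sub>v x0) + sqn (R *\<^sub>v u0)"
  fix z
  assume "z \<in> {ereal (cost T Q R xs us) | xs us.
                feasible nx nu mu T A B F G h (A *\<^sub>v x0 + B *\<^sub>v u0) xs us}"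
  then obtain xs us where z: "z = ereal (cost T Q R xs us)"
    and feasible: "feasible nx nu mu T A B F G h (A *\<^sub>v x0 + B *\<^sub>v u0) xs us"
    by blast
  have "theta nx nu mu T A B F G h Q R x0 \<le> ereal (cost T Q R (case_nat x0 xs) (case_nat u0 us))"
    using feasible_case_nat[OF feasible assms] by (rule theta_le_cost)
  also have "\<dots> \<le> z + ereal ?c"
    using cost_case_nat_le[of T Q R x0 xs u0 us] by (simp add: z)
  finally show "theta nx nu mu T A B F G h Q R x0 - ereal ?c \<le> z"
    by (simp add: ereal_minus_le)
qed

theorem lemma2:
  fixes nx nu mu T p q r :: nat
    and A B F G Q R :: "real mat" and h x0 u0 :: "real vec"
  assumes "T \<ge> 1"
    and "A \<in> carrier_mat nx nx" and "B \<in> carrier_mat nx (nu + mu)"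
    and "F \<in> carrier_mat p nx" and "G \<in> carrier_mat p (nu + mu)" and "h \<in> carrier_vec p"
    and "inD F G h (0\<^sub>v nx) (0\<^sub>v (nu + mu))"
    and "Q \<in> carrier_mat q nx" and "R \<in> carrier_mat r (nu + mu)"
    and "x0 \<in> carrier_vec nx" and "u0 \<in> carrier_vec (nu + mu)"
    and "binary_ok nu mu u0"
    and "inD F G h x0 u0"
  shows "theta nx nu mu T A B F G h Q R (A *\<^sub>v x0 + B *\<^sub>v u0)
           \<ge> theta nx nu mu T A B F G h Q R x0 - ereal (sqn (Q *\<^sub>v x0)) - ereal (sqn (R *\<^sub>v u0))"
  using theta_minus_stage_cost_le_theta_step[OF assms(10,11,13,12), of T A B Q R]
  by (simp add: ereal_diff_add_eq_diff_diff_swap flip: plus_ereal.simps(1))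

end
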